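(* Assume $|\mathcal S|\ge2$ and let $\epsilon,\delta,\tau>0$. Consider the following procedure (Tau-Push, DPPR part): set $r_{max}=\frac{\epsilon\delta}{m\tau}$; for each $\mathcal V_i\in\mathcal S$ run GFP$(G,\mathcal S,\mathcal V_i,r_{max})$ and record its outputs $\hat\pi_d(\mathcal V_i,\mathcal V_j)$ for all $\mathcal V_j\in\mathcal S$; then for each $\mathcal V_j\in\mathcal S$ with $\tau_j>\tau$, run GBP$(G,\mathcal S,\mathcal V_j,r^b_{max}(\mathcal V_j))$ with $r^b_{max}(\mathcal V_j)=\epsilon\delta\big/\max_{\mathcal V_i\in\mathcal S\setminus\{\mathcal V_j\}}\frac{1}{|F(\mathcal V_i)|}\sum_{v_s\in F(\mathcal V_i)}d(v_s)$, and replace the recorded $\hat\pi_d(\mathcal V_i,\mathcal V_j)$ by the GBP output for every $\mathcal V_i\in\mathcal S$. Then the procedure terminates and, for all $\mathcal V_i,\mathcal V_j\in\mathcal S$ with $\mathcal V_i\ne\mathcal V_j$, the final value $\hat\pi_d(\mathcal V_i,\mathcal V_j)$ is an $(\epsilon,\delta)$-approximation of $\pi_d(\mathcal V_i,\mathcal V_j)$.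
   Context: $G=(V,E)$ is a directed graph with $n$ nodes and $m$ edges, no self-loops, and every node of out-degree $d(v)\ge1$; $\alpha\in(0,1)$. PPR $\pi(u,v)$: probability that a random walk from $u$ which at each step stops with probability $\alpha$ and otherwise moves to a uniformly random out-neighbor stops at $v$; $\pi_d(u,v)=d(u)\pi(u,v)$. A collection $\mathcal S=\{\mathcal V_1,\dots,\mathcal V_k\}$ of supernodes is given, each $\mathcal V_i$ having a nonempty leaf set $F(\mathcal V_i)\subseteq V$, the leaf sets being pairwise disjoint. For supernodes, $\pi_d(\mathcal V_i,\mathcal V_j)=\frac{1}{|F(\mathcal V_i)||F(\mathcal V_j)|}\sum_{v_s\in F(\mathcal V_i),v_t\in F(\mathcal V_j)}\pi_d(v_s,v_t)$. The degree-normalized PageRank of $\mathcal V_j$ is $\tau_j=\frac{1}{m|F(\mathcal V_j)|}\sum_{v_t\in F(\mathcal V_j)}\sum_{v_k\in V}\pi_d(v_k,v_t)$. A value $\hat x$ is an $(\epsilon,\delta)$-approximation of $x\ge0$ if $|\hat x-x|\le\epsilon\delta$ when $x<\delta$, and $|\hat x-x|\le\epsilon x$ when $x\ge\delta$. Procedure GFP$(G,\mathcal S,\mathcal V_i,r_{max})$: set $\hat\pi_d(\mathcal V_i,\mathcal V_j)=0$ for all $\mathcal V_j\in\mathcal S$; set $r(\mathcal V_i,v)=d(v)/|F(\mathcal V_i)|$ for $v\in F(\mathcal V_i)$ and $0$ otherwise. While some $v_k$ has $r(\mathcal V_i,v_k)>d(v_k)\,r_{max}$, pick any such $v_k$ and: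 if $v_k\in F(\mathcal V_j)$ for some $\mathcal V_j\in\mathcal S$, add $\alpha\,r(\mathcal V_i,v_k)/|F(\mathcal V_j)|$ to $\hat\pi_d(\mathcal V_i,\mathcal V_j)$; for each out-neighbor $v_j$ of $v_k$ add $(1-\alpha)\,r(\mathcal V_i,v_k)/d(v_k)$ to $r(\mathcal V_i,v_j)$; then set $r(\mathcal V_i,v_k)=0$. Output $\hat\pi_d(\mathcal V_i,\cdot)$. Procedure GBP$(G,\mathcal S,\mathcal V_j,r^b_{max})$: set $\hat\pi_d(\mathcal V_i,\mathcal V_j)=0$ for all $\mathcal V_i\in\mathcal S$; set $r(v,\mathcal V_j)=1/|F(\mathcal V_j)|$ for $v\in F(\mathcal V_j)$ and $0$ otherwise. While some $v_k$ has $r(v_k,\mathcal V_j)>r^b_{max}$, pick any such $v_k$ and: if $v_k\in F(\mathcal V_i)$ for some $\mathcal V_i\in\mathcal S$, add $\alpha\,d(v_k)\,r(v_k,\mathcal V_j)/|F(\mathcal V_i)|$ to $\hat\pi_d(\mathcal V_i,\mathcal V_j)$; for each in-neighbor $v_i$ of $v_k$ add $(1-\alpha)\,r(v_k,\mathcal V_j)/d(v_i)$ to $r(v_i,\mathcal V_j)$; then set $r(v_k,\mathcal V_j)=0$. Output $\hat\pi_d(\cdot,\mathcal V_j)$. *)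

theory Defs
  imports Complex_Main
begin

definition outN :: "('v \<times> 'v) set \<Rightarrow> 'v \<Rightarrow> 'v set" where
  "outN E u = {w. (u, w) \<in> E}"

definition inN :: "('v \<times> 'v) set \<Rightarrow> 'v \<Rightarrow> 'v set" where
  "inN E u = {w. (w, u) \<in> E}"

definition outdeg :: "('v \<times> 'v) set \<Rightarrow> 'v \<Rightarrow> nat" where
  "outdeg E u = card (outN E u)"

primrec walkp :: "('v \<times> 'v) set \<Rightarrow> nat \<Rightarrow> 'v \<Rightarrow> 'v \<Rightarrow> real" where
  "walkp E 0 u v = (if u = v then 1 else 0)"
| "walkp E (Suc k) u v = (\<Sum>w\<in>outN E u. walkp E k w v) / real (outdeg E u)"

(* PPR: the walk stops after exactly k moves with probability alpha (1-alpha)^k *)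
definition ppr :: "('v \<times> 'v) set \<Rightarrow> real \<Rightarrow> 'v \<Rightarrow> 'v \<Rightarrow> real" where
  "ppr E \<alpha> u v = (\<Sum>k. \<alpha> * (1 - \<alpha>) ^ k * walkp E k u v)"

definition pprd :: "('v \<times> 'v) set \<Rightarrow> real \<Rightarrow> 'v \<Rightarrow> 'v \<Rightarrow> real" where
  "pprd E \<alpha> u v = real (outdeg E u) * ppr E \<alpha> u v"

(* supernode-level degree-normalised PPR; supernodes indexed by 'i, leaf sets F i *)
definition pprd_super :: "('v \<times> 'v) set \<Rightarrow> real \<Rightarrow> ('i \<Rightarrow> 'v set) \<Rightarrow> 'i \<Rightarrow> 'i \<Rightarrow> real" where
  "pprd_super E \<alpha> F i j =
     (\<Sum>s\<in>F i. \<Sum>t\<in>F j. pprd E \<alpha> s t) / (real (card (F i)) * real (card (F j)))"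

definition dpr :: "'v set \<Rightarrow> ('v \<times> 'v) set \<Rightarrow> real \<Rightarrow> ('i \<Rightarrow> 'v set) \<Rightarrow> 'i \<Rightarrow> real" where
  "dpr V E \<alpha> F j =
     (\<Sum>t\<in>F j. \<Sum>k\<in>V. pprd E \<alpha> k t) / (real (card E) * real (card (F j)))"

definition approx :: "real \<Rightarrow> real \<Rightarrow> real \<Rightarrow> real \<Rightarrow> bool" where
  "approx \<epsilon> \<delta> xh x =
     (if x < \<delta> then \<bar>xh - x\<bar> \<le> \<epsilon> * \<delta> else \<bar>xh - x\<bar> \<le> \<epsilon> * x)"

(* state: (estimates hat(V_i, .) indexed by 'i, residues r(V_i, .) indexed by vertices) *)

definition gfp_init :: "('v \<times> 'v) set \<Rightarrow> ('i \<Rightarrow> 'v set) \<Rightarrow> 'i \<Rightarrow> ('i \<Rightarrow> real) \<times> ('v \<Rightarrow> real)" where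
  "gfp_init E F i =
     (\<lambda>j. 0, \<lambda>v. if v \<in> F i then real (outdeg E v) / real (card (F i)) else 0)"

definition gfp_step :: "'v set \<Rightarrow> ('v \<times> 'v) set \<Rightarrow> 'i set \<Rightarrow> ('i \<Rightarrow> 'v set) \<Rightarrow> real \<Rightarrow> real
    \<Rightarrow> ('i \<Rightarrow> real) \<times> ('v \<Rightarrow> real) \<Rightarrow> ('i \<Rightarrow> real) \<times> ('v \<Rightarrow> real) \<Rightarrow> bool" where
  "gfp_step V E I F \<alpha> rmax st st' =
     (\<exists>vk\<in>V. snd st vk > real (outdeg E vk) * rmax \<and>
        fst st' = (\<lambda>j. if j \<in> I \<and> vk \<in> F j
                        then fst st j + \<alpha> * snd st vk / real (card (F j)) else fst st j) \<and>
        snd st' = (\<lambda>v. if v = vk then 0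
                        else snd st v + (if v \<in> outN E vk
                                          then (1 - \<alpha>) * snd st vk / real (outdeg E vk) else 0)))"

definition gfp_output :: "'v set \<Rightarrow> ('v \<times> 'v) set \<Rightarrow> 'i set \<Rightarrow> ('i \<Rightarrow> 'v set) \<Rightarrow> real \<Rightarrow> real
    \<Rightarrow> 'i \<Rightarrow> ('i \<Rightarrow> real) \<Rightarrow> bool" where
  "gfp_output V E I F \<alpha> rmax i h =
     (\<exists>r. (gfp_step V E I F \<alpha> rmax)\<^sup>*\<^sup>* (gfp_init E F i) (h, r) \<and>
          \<not> (\<exists>st'. gfp_step V E I F \<alpha> rmax (h, r) st'))"

(* state: (estimates hat(., V_j) indexed by 'i, residues r(., V_j) indexed by vertices) *)

definition gbp_init :: "('i \<Rightarrow> 'v set) \<Rightarrow> 'i \<Rightarrow> ('i \<Rightarrow> real) \<times> ('v \<Rightarrow> real)" where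
  "gbp_init F j = (\<lambda>i. 0, \<lambda>v. if v \<in> F j then 1 / real (card (F j)) else 0)"

definition gbp_step :: "'v set \<Rightarrow> ('v \<times> 'v) set \<Rightarrow> 'i set \<Rightarrow> ('i \<Rightarrow> 'v set) \<Rightarrow> real \<Rightarrow> real
    \<Rightarrow> ('i \<Rightarrow> real) \<times> ('v \<Rightarrow> real) \<Rightarrow> ('i \<Rightarrow> real) \<times> ('v \<Rightarrow> real) \<Rightarrow> bool" where
  "gbp_step V E I F \<alpha> rbmax st st' =
     (\<exists>vk\<in>V. snd st vk > rbmax \<and>
        fst st' = (\<lambda>i. if i \<in> I \<and> vk \<in> F i
                        then fst st i + \<alpha> * real (outdeg E vk) * snd st vk / real (card (F i))
                        else fst st i) \<and>
        snd st' = (\<lambda>v. if v = vk then 0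
                        else snd st v + (if v \<in> inN E vk
                                          then (1 - \<alpha>) * snd st vk / real (outdeg E v) else 0)))"

definition gbp_output :: "'v set \<Rightarrow> ('v \<times> 'v) set \<Rightarrow> 'i set \<Rightarrow> ('i \<Rightarrow> 'v set) \<Rightarrow> real \<Rightarrow> real
    \<Rightarrow> 'i \<Rightarrow> ('i \<Rightarrow> real) \<Rightarrow> bool" where
  "gbp_output V E I F \<alpha> rbmax j h =
     (\<exists>r. (gbp_step V E I F \<alpha> rbmax)\<^sup>*\<^sup>* (gbp_init F j) (h, r) \<and>
          \<not> (\<exists>st'. gbp_step V E I F \<alpha> rbmax (h, r) st'))"

definition terminates :: "('s \<Rightarrow> 's \<Rightarrow> bool) \<Rightarrow> 's \<Rightarrow> bool" where
  "terminates step st0 = (\<nexists>f. f 0 = st0 \<and> (\<forall>k. step (f k) (f (Suc k))))"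

definition rmax_tau :: "('v \<times> 'v) set \<Rightarrow> real \<Rightarrow> real \<Rightarrow> real \<Rightarrow> real" where
  "rmax_tau E \<epsilon> \<delta> \<tau> = \<epsilon> * \<delta> / (real (card E) * \<tau>)"

definition rbmax_tau :: "('v \<times> 'v) set \<Rightarrow> 'i set \<Rightarrow> ('i \<Rightarrow> 'v set) \<Rightarrow> real \<Rightarrow> real \<Rightarrow> 'i \<Rightarrow> real" where
  "rbmax_tau E I F \<epsilon> \<delta> j =
     \<epsilon> * \<delta> / Max ((\<lambda>i. (\<Sum>s\<in>F i. real (outdeg E s)) / real (card (F i))) ` (I - {j}))"

end

theory Submission
  imports Defs
begin

text \<open>
  Both push procedures maintain an exact decomposition of the target value into the current
  estimate plus the residues weighted by PPR: for forward push from \<open>V\<^sub>i\<close>,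
  \<open>\<pi>\<^sub>d(V\<^sub>i,V\<^sub>j) = h(V\<^sub>j) + \<Sum>\<^sub>v \<pi>(v,V\<^sub>j) r(v)\<close>; for backward push into \<open>V\<^sub>j\<close>,
  \<open>\<pi>\<^sub>d(V\<^sub>i,V\<^sub>j) = h(V\<^sub>i) + (1/|F(V\<^sub>i)|) \<Sum>\<^bsub>s\<in>F(V\<^sub>i)\<^esub> d(s) \<Sum>\<^sub>v \<pi>(s,v) r(v)\<close>.
  A push preserves the decomposition because it is exactly the one-step recursion of PPR
  (over the first step of the walk for forward push, over the last one for backward push), and
  it lowers a nonnegative potential by at least \<open>\<alpha>\<close> times the threshold, whence termination.
  Once no push is possible every residue is below its threshold, so the estimate underestimates
  the truth by at most \<open>r\<^bsub>max\<^esub> \<Sum>\<^sub>v d(v) \<pi>(v,V\<^sub>j) = r\<^bsub>max\<^esub> m \<tau>\<^sub>j\<close>, which is at most \<open>\<epsilon>\<delta>\<close> when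
  \<open>\<tau>\<^sub>j \<le> \<tau>\<close>, respectively by at most \<open>r\<^sup>b\<^bsub>max\<^esub>\<close> times the average out-degree of \<open>F(V\<^sub>i)\<close>,
  which is at most \<open>\<epsilon>\<delta>\<close> by the choice of \<open>r\<^sup>b\<^bsub>max\<^esub>\<close>.
\<close>

lemma walkp_nonneg: "0 \<le> walkp E k u v"
  by (induction k arbitrary: u) (auto intro!: divide_nonneg_nonneg sum_nonneg)

lemma walkp_le_1: "walkp E k u v \<le> 1"
proof (induction k arbitrary: u)
  case (Suc k)
  have "(\<Sum>w\<in>outN E u. walkp E k w v) \<le> real (outdeg E u)"
    using sum_bounded_above[of "outN E u" "\<lambda>w. walkp E k w v" 1] Suc.IH
    by (simp add: outdeg_def)
  then show ?case
    by (cases "outdeg E u = 0") (auto simp: divide_le_eq_1)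
qed simp

lemma summable_ppr_terms:
  fixes \<alpha> :: real
  assumes "0 < \<alpha>" "\<alpha> < 1" "\<And>k. 0 \<le> w k" "\<And>k. w k \<le> 1"
  shows "summable (\<lambda>k. \<alpha> * (1 - \<alpha>) ^ k * w k)"
proof (rule summable_comparison_test'[where g = "\<lambda>k. \<alpha> * (1 - \<alpha>) ^ k"])
  show "summable (\<lambda>k. \<alpha> * (1 - \<alpha>) ^ k)"
    using assms by (intro summable_mult summable_geometric) auto
  show "norm (\<alpha> * (1 - \<alpha>) ^ k * w k) \<le> \<alpha> * (1 - \<alpha>) ^ k" for k
    using assms(1,2) assms(3,4)[of k] by (simp add: abs_mult mult_left_le)
qed

locale ppr_graph =
  fixes V :: "'v set" and E :: "('v \<times> 'v) set" and \<alpha> :: real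
  assumes finite_V: "finite V" and E_subset: "E \<subseteq> V \<times> V" and no_loops: "\<forall>v. (v, v) \<notin> E"
    and outdeg_ge_1: "\<forall>v\<in>V. outdeg E v \<ge> 1" and alpha_pos: "0 < \<alpha>" and alpha_less_1: "\<alpha> < 1"
begin

lemma outN_subset: "outN E u \<subseteq> V"
  using E_subset by (auto simp: outN_def)

lemma inN_subset: "inN E u \<subseteq> V"
  using E_subset by (auto simp: inN_def)

lemma outN_irrefl: "u \<notin> outN E u"
  using no_loops by (simp add: outN_def)

lemma inN_irrefl: "u \<notin> inN E u"
  using no_loops by (simp add: inN_def)

lemma finite_outN: "finite (outN E u)"
  using outN_subset finite_V finite_subset by blast

lemma finite_inN: "finite (inN E u)"
  using inN_subset finite_V finite_subset by blast

lemma outdeg_pos: "u \<in> V \<Longrightarrow> 0 < real (outdeg E u)"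
  using outdeg_ge_1 by force

lemma walkp_sum_eq_1: "u \<in> V \<Longrightarrow> (\<Sum>v\<in>V. walkp E k u v) = 1"
proof (induction k arbitrary: u)
  case (Suc k)
  have "(\<Sum>v\<in>V. walkp E (Suc k) u v) = (\<Sum>w\<in>outN E u. \<Sum>v\<in>V. walkp E k w v) / real (outdeg E u)"
    by (simp add: sum_divide_distrib[symmetric] sum.swap[of _ V])
  also have "\<dots> = real (card (outN E u)) / real (outdeg E u)"
    using Suc.IH outN_subset by (simp add: subset_iff)
  also have "\<dots> = 1"
    using outdeg_pos[OF Suc.prems] by (simp add: outdeg_def)
  finally show ?case .
qed (simp add: finite_V)

lemma walkp_Suc_last: "walkp E (Suc k) u t = (\<Sum>x\<in>inN E t. walkp E k u x / real (outdeg E x))"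
proof (induction k arbitrary: u)
  case 0
  have "t \<in> outN E u \<longleftrightarrow> u \<in> inN E t"
    by (simp add: outN_def inN_def)
  then show ?case
    using finite_outN finite_inN by (simp add: if_distrib[of "\<lambda>y. y / _"] sum.delta cong: if_cong)
next
  case (Suc k)
  have "walkp E (Suc (Suc k)) u t = (\<Sum>w\<in>outN E u. walkp E (Suc k) w t) / real (outdeg E u)"
    by (rule walkp.simps(2))
  also have "\<dots> = (\<Sum>w\<in>outN E u. \<Sum>x\<in>inN E t. walkp E k w x / real (outdeg E x)) / real (outdeg E u)"
    by (simp only: Suc.IH)
  also have "\<dots> = (\<Sum>x\<in>inN E t. (\<Sum>w\<in>outN E u. walkp E k w x) / real (outdeg E u) / real (outdeg E x))"
    by (simp add: sum.swap[of _ "outN E u"] sum_divide_distrib mult_ac)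
  finally show ?case by simp
qed

lemma summable_ppr: "summable (\<lambda>k. \<alpha> * (1 - \<alpha>) ^ k * walkp E k u v)"
  using alpha_pos alpha_less_1 by (intro summable_ppr_terms walkp_nonneg walkp_le_1) auto

lemma ppr_nonneg: "0 \<le> ppr E \<alpha> u v"
  unfolding ppr_def using alpha_pos alpha_less_1
  by (intro suminf_nonneg summable_ppr) (auto intro!: mult_nonneg_nonneg walkp_nonneg)

lemma ppr_sum_eq_1: "u \<in> V \<Longrightarrow> (\<Sum>v\<in>V. ppr E \<alpha> u v) = 1"
proof -
  assume u: "u \<in> V"
  have "(\<Sum>v\<in>V. ppr E \<alpha> u v) = (\<Sum>k. \<Sum>v\<in>V. \<alpha> * (1 - \<alpha>) ^ k * walkp E k u v)"
    unfolding ppr_def by (rule suminf_sum[symmetric]) (rule summable_ppr)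
  also have "\<dots> = (\<Sum>k. \<alpha> * (1 - \<alpha>) ^ k)"
    by (simp add: sum_distrib_left[symmetric] walkp_sum_eq_1[OF u])
  also have "\<dots> = 1"
    using alpha_pos alpha_less_1 by (simp add: suminf_mult summable_geometric suminf_geometric)
  finally show ?thesis .
qed

lemma ppr_split_first_step:
  "ppr E \<alpha> u t = \<alpha> * (if u = t then 1 else 0) + (1 - \<alpha>) * (\<Sum>k. \<alpha> * (1 - \<alpha>) ^ k * walkp E (Suc k) u t)"
proof -
  have "ppr E \<alpha> u t = \<alpha> * walkp E 0 u t + (\<Sum>k. \<alpha> * (1 - \<alpha>) ^ Suc k * walkp E (Suc k) u t)"
    unfolding ppr_def using suminf_split_head[OF summable_ppr] by simp
  also have "(\<Sum>k. \<alpha> * (1 - \<alpha>) ^ Suc k * walkp E (Suc k) u t)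
      = (\<Sum>k. (1 - \<alpha>) * (\<alpha> * (1 - \<alpha>) ^ k * walkp E (Suc k) u t))"
    by (simp add: mult_ac)
  also have "\<dots> = (1 - \<alpha>) * (\<Sum>k. \<alpha> * (1 - \<alpha>) ^ k * walkp E (Suc k) u t)"
    using alpha_pos alpha_less_1
    by (intro suminf_mult summable_ppr_terms walkp_nonneg walkp_le_1) auto
  finally show ?thesis by simp
qed

lemma ppr_forward:
  "ppr E \<alpha> u t =
     \<alpha> * (if u = t then 1 else 0) + (1 - \<alpha>) / real (outdeg E u) * (\<Sum>w\<in>outN E u. ppr E \<alpha> w t)"
proof -
  have "(\<Sum>k. \<alpha> * (1 - \<alpha>) ^ k * walkp E (Suc k) u t)
      = (\<Sum>k. (\<Sum>w\<in>outN E u. \<alpha> * (1 - \<alpha>) ^ k * walkp E k w t) / real (outdeg E u))"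
    by (simp add: sum_distrib_left)
  also have "\<dots> = (\<Sum>k. \<Sum>w\<in>outN E u. \<alpha> * (1 - \<alpha>) ^ k * walkp E k w t) / real (outdeg E u)"
    by (intro suminf_divide summable_sum summable_ppr)
  also have "\<dots> = (\<Sum>w\<in>outN E u. ppr E \<alpha> w t) / real (outdeg E u)"
    unfolding ppr_def by (subst suminf_sum) (auto intro: summable_ppr)
  finally show ?thesis
    by (subst ppr_split_first_step) simp
qed

lemma ppr_backward:
  "ppr E \<alpha> u t =
     \<alpha> * (if u = t then 1 else 0) + (1 - \<alpha>) * (\<Sum>x\<in>inN E t. ppr E \<alpha> u x / real (outdeg E x))"
proof -
  have "(\<Sum>k. \<alpha> * (1 - \<alpha>) ^ k * walkp E (Suc k) u t)
      = (\<Sum>k. \<Sum>x\<in>inN E t. \<alpha> * (1 - \<alpha>) ^ k * walkp E k u x / real (outdeg E x))"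
    by (simp del: walkp.simps add: walkp_Suc_last sum_distrib_left)
  also have "\<dots> = (\<Sum>x\<in>inN E t. \<Sum>k. \<alpha> * (1 - \<alpha>) ^ k * walkp E k u x / real (outdeg E x))"
    by (intro suminf_sum summable_divide summable_ppr)
  also have "\<dots> = (\<Sum>x\<in>inN E t. (\<Sum>k. \<alpha> * (1 - \<alpha>) ^ k * walkp E k u x) / real (outdeg E x))"
    by (intro sum.cong refl suminf_divide summable_ppr)
  finally show ?thesis
    by (subst ppr_split_first_step) (simp add: ppr_def)
qed

end
lemma terminates_by_potential:
  fixes \<Phi> :: "'s \<Rightarrow> real"
  assumes "Q s0"
    and step: "\<And>s s'. Q s \<Longrightarrow> step s s' \<Longrightarrow> Q s' \<and> \<Phi> s' \<le> \<Phi> s - c"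
    and nonneg: "\<And>s. Q s \<Longrightarrow> 0 \<le> \<Phi> s" and "0 < c"
  shows "terminates step s0"
  unfolding terminates_def
proof
  assume "\<exists>f. f 0 = s0 \<and> (\<forall>k. step (f k) (f (Suc k)))"
  then obtain f where "f 0 = s0" and f_step: "\<And>k. step (f k) (f (Suc k))" by blast
  have run: "Q (f k) \<and> \<Phi> (f k) \<le> \<Phi> s0 - real k * c" for k
  proof (induction k)
    case (Suc k)
    then show ?case using step[OF _ f_step[of k]] by (auto simp: algebra_simps)
  qed (simp add: \<open>Q s0\<close> \<open>f 0 = s0\<close>)
  obtain k where "\<Phi> s0 < real k * c" using reals_Archimedean3[OF \<open>0 < c\<close>] by blast
  with run[of k] nonneg[of "f k"] show False by linarith
qed

lemma approx_of_underestimate: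
  assumes "0 \<le> x - xh" "x - xh \<le> \<epsilon> * \<delta>" "0 \<le> \<epsilon>"
  shows "approx \<epsilon> \<delta> xh x"
proof -
  have "\<epsilon> * \<delta> \<le> \<epsilon> * x" if "\<delta> \<le> x" using that assms(3) by (rule mult_left_mono)
  then show ?thesis using assms unfolding approx_def by auto
qed

lemma sum_push_update:
  fixes g r c :: "'v \<Rightarrow> real"
  assumes "finite V" "vk \<in> V" "N \<subseteq> V" "vk \<notin> N"
  shows "(\<Sum>v\<in>V. g v * (if v = vk then 0 else r v + (if v \<in> N then c v else 0)))
       = (\<Sum>v\<in>V. g v * r v) - g vk * r vk + (\<Sum>v\<in>N. g v * c v)"
proof -
  have "(\<Sum>v\<in>V. g v * (if v = vk then 0 else r v + (if v \<in> N then c v else 0)))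
      = (\<Sum>v\<in>V. g v * r v - (if v = vk then g vk * r vk else 0) + (if v \<in> N then g v * c v else 0))"
    using assms by (intro sum.cong) (auto simp: distrib_left)
  also have "\<dots> = (\<Sum>v\<in>V. g v * r v) - g vk * r vk + (\<Sum>v\<in>V \<inter> N. g v * c v)"
    using assms by (simp add: sum.distrib sum_subtractf sum.inter_restrict)
  also have "V \<inter> N = N" using assms by blast
  finally show ?thesis .
qed

lemma gfp_final_residue_le:
  assumes "\<not> (\<exists>st'. gfp_step V E I F \<alpha> rmax (h, r) st')" "v \<in> V"
  shows "r v \<le> real (outdeg E v) * rmax"
proof (rule ccontr)
  assume "\<not> ?thesis"
  then have "gfp_step V E I F \<alpha> rmax (h, r)
      ((\<lambda>j. if j \<in> I \<and> v \<in> F j then h j + \<alpha> * r v / real (card (F j)) else h j),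
       (\<lambda>u. if u = v then 0 else r u + (if u \<in> outN E v then (1 - \<alpha>) * r v / real (outdeg E v) else 0)))"
    unfolding gfp_step_def fst_conv snd_conv using \<open>v \<in> V\<close> by (intro bexI[of _ v]) auto
  with assms(1) show False by blast
qed

lemma gbp_final_residue_le:
  assumes "\<not> (\<exists>st'. gbp_step V E I F \<alpha> rbmax (h, r) st')" "v \<in> V"
  shows "r v \<le> rbmax"
proof (rule ccontr)
  assume "\<not> ?thesis"
  then have "gbp_step V E I F \<alpha> rbmax (h, r)
      ((\<lambda>i. if i \<in> I \<and> v \<in> F i then h i + \<alpha> * real (outdeg E v) * r v / real (card (F i)) else h i),
       (\<lambda>u. if u = v then 0 else r u + (if u \<in> inN E v then (1 - \<alpha>) * r v / real (outdeg E u) else 0)))"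
    unfolding gbp_step_def fst_conv snd_conv using \<open>v \<in> V\<close> by (intro bexI[of _ v]) auto
  with assms(1) show False by blast
qed

definition avg_outdeg :: "('v \<times> 'v) set \<Rightarrow> ('i \<Rightarrow> 'v set) \<Rightarrow> 'i \<Rightarrow> real" where
  "avg_outdeg E F i = (\<Sum>s\<in>F i. real (outdeg E s)) / real (card (F i))"

locale supernode_graph = ppr_graph V E \<alpha> for V :: "'v set" and E \<alpha> +
  fixes I :: "'i set" and F :: "'i \<Rightarrow> 'v set"
  assumes finite_I: "finite I" and F_nonempty: "\<forall>i\<in>I. F i \<noteq> {}" and F_subset: "\<forall>i\<in>I. F i \<subseteq> V"
begin

lemma finite_F: "i \<in> I \<Longrightarrow> finite (F i)"
  using F_subset finite_V finite_subset by blast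

lemma card_F_pos: "i \<in> I \<Longrightarrow> 0 < real (card (F i))"
  using finite_F F_nonempty by (simp add: card_gt_0_iff)

lemma avg_outdeg_pos: "i \<in> I \<Longrightarrow> 0 < avg_outdeg E F i"
  unfolding avg_outdeg_def using F_nonempty F_subset finite_F outdeg_pos card_F_pos
  by (intro divide_pos_pos sum_pos) (auto simp: subset_iff)

lemma card_E_pos: "i \<in> I \<Longrightarrow> 0 < real (card E)"
proof -
  assume "i \<in> I"
  then obtain v where "v \<in> V" using F_nonempty F_subset by blast
  then have "outN E v \<noteq> {}" using outdeg_ge_1 unfolding outdeg_def by force
  then have "E \<noteq> {}" unfolding outN_def by auto
  moreover have "finite E" using E_subset finite_V by (meson finite_SigmaI finite_subset)
  ultimately show ?thesis by (simp add: card_gt_0_iff)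
qed

definition ppr_to_super :: "'i \<Rightarrow> 'v \<Rightarrow> real" where
  "ppr_to_super j v = (\<Sum>t\<in>F j. ppr E \<alpha> v t) / real (card (F j))"

lemma ppr_to_super_nonneg: "0 \<le> ppr_to_super j v"
  unfolding ppr_to_super_def by (intro divide_nonneg_nonneg sum_nonneg ppr_nonneg) auto

lemma ppr_to_super_forward:
  assumes "j \<in> I"
  shows "ppr_to_super j v = \<alpha> * (if v \<in> F j then 1 else 0) / real (card (F j))
     + (1 - \<alpha>) / real (outdeg E v) * (\<Sum>w\<in>outN E v. ppr_to_super j w)"
proof -
  have "(\<Sum>t\<in>F j. ppr E \<alpha> v t) = \<alpha> * (if v \<in> F j then 1 else 0)
      + (1 - \<alpha>) / real (outdeg E v) * (\<Sum>w\<in>outN E v. \<Sum>t\<in>F j. ppr E \<alpha> w t)"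
    using finite_F[OF assms]
    by (simp add: ppr_forward[of v] sum.distrib sum_distrib_left[symmetric] sum_divide_distrib[symmetric]
        sum.swap[of _ "F j"])
  then show ?thesis unfolding ppr_to_super_def
    by (simp add: add_divide_distrib sum_divide_distrib[symmetric])
qed

lemma pprd_super_eq_sum_ppr_to_super:
  assumes "i \<in> I"
  shows "pprd_super E \<alpha> F i j = (\<Sum>s\<in>F i. real (outdeg E s) / real (card (F i)) * ppr_to_super j s)"
  unfolding pprd_super_def pprd_def ppr_to_super_def
  by (simp add: sum_divide_distrib sum_distrib_left sum_distrib_right mult_ac)

lemma sum_outdeg_ppr_to_super:
  assumes "j \<in> I"
  shows "(\<Sum>v\<in>V. real (outdeg E v) * ppr_to_super j v) = real (card E) * dpr V E \<alpha> F j"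
proof -
  have "(\<Sum>v\<in>V. real (outdeg E v) * ppr_to_super j v) = (\<Sum>t\<in>F j. \<Sum>v\<in>V. pprd E \<alpha> v t) / real (card (F j))"
    unfolding ppr_to_super_def pprd_def by (simp add: sum_divide_distrib sum_distrib_left sum.swap[of _ V])
  then show ?thesis unfolding dpr_def using card_E_pos[OF assms] card_F_pos[OF assms] by simp
qed

definition gfp_inv :: "'i \<Rightarrow> ('i \<Rightarrow> real) \<times> ('v \<Rightarrow> real) \<Rightarrow> bool" where
  "gfp_inv i st \<longleftrightarrow> (\<forall>v. 0 \<le> snd st v) \<and>
     (\<forall>j\<in>I. pprd_super E \<alpha> F i j = fst st j + (\<Sum>v\<in>V. ppr_to_super j v * snd st v))"

lemma gfp_inv_init: "i \<in> I \<Longrightarrow> gfp_inv i (gfp_init E F i)"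
proof -
  assume i: "i \<in> I"
  have "(\<Sum>v\<in>V. ppr_to_super j v * (if v \<in> F i then real (outdeg E v) / real (card (F i)) else 0))
      = (\<Sum>v\<in>V \<inter> F i. real (outdeg E v) / real (card (F i)) * ppr_to_super j v)" for j
    using finite_V by (simp add: sum.inter_restrict if_distrib[of "\<lambda>x. _ * x"] mult.commute cong: if_cong)
  moreover have "V \<inter> F i = F i" using F_subset i by blast
  ultimately show ?thesis
    unfolding gfp_inv_def gfp_init_def
    by (simp add: pprd_super_eq_sum_ppr_to_super[OF i])
qed

lemma gfp_inv_step:
  assumes inv: "gfp_inv i st" and step: "gfp_step V E I F \<alpha> rmax st st'" and "0 \<le> rmax"
  shows "gfp_inv i st' \<and> (\<Sum>v\<in>V. snd st' v) \<le> (\<Sum>v\<in>V. snd st v) - \<alpha> * rmax"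
proof -
  obtain h r h' r' where st: "st = (h, r)" and st': "st' = (h', r')" by fastforce
  from step obtain vk where vk: "vk \<in> V" and big: "real (outdeg E vk) * rmax < r vk"
    and h': "h' = (\<lambda>j. if j \<in> I \<and> vk \<in> F j then h j + \<alpha> * r vk / real (card (F j)) else h j)"
    and r': "r' = (\<lambda>v. if v = vk then 0 else r v + (if v \<in> outN E vk
                       then (1 - \<alpha>) * r vk / real (outdeg E vk) else 0))"
    unfolding gfp_step_def st st' fst_conv snd_conv by blast
  define c where "c = (1 - \<alpha>) * r vk / real (outdeg E vk)"
  have push: "(\<Sum>v\<in>V. g v * r' v) = (\<Sum>v\<in>V. g v * r v) - g vk * r vk + c * (\<Sum>v\<in>outN E vk. g v)" for g
    unfolding r' c_def[symmetric]
    using sum_push_update[OF finite_V vk outN_subset outN_irrefl, where g = g and r = r and c = "\<lambda>_. c"]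
    by (simp add: sum_distrib_left mult.commute)
  have r_nonneg: "\<forall>v. 0 \<le> r v" and r_eq: "\<forall>j\<in>I. pprd_super E \<alpha> F i j = h j + (\<Sum>v\<in>V. ppr_to_super j v * r v)"
    using inv unfolding gfp_inv_def st by auto
  have "0 \<le> c" unfolding c_def using r_nonneg alpha_less_1 by simp
  then have "\<forall>v. 0 \<le> r' v" using r_nonneg by (simp add: r' flip: c_def)
  moreover have "pprd_super E \<alpha> F i j = h' j + (\<Sum>v\<in>V. ppr_to_super j v * r' v)" if j: "j \<in> I" for j
  proof -
    have "(\<Sum>v\<in>V. ppr_to_super j v * r' v)
        = (\<Sum>v\<in>V. ppr_to_super j v * r v) - \<alpha> * (if vk \<in> F j then 1 else 0) / real (card (F j)) * r vk"
      using push[of "ppr_to_super j"] by (simp add: ppr_to_super_forward[OF j, of vk] c_def algebra_simps)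
    then show ?thesis using r_eq j by (simp add: h')
  qed
  moreover have "(\<Sum>v\<in>V. r' v) = (\<Sum>v\<in>V. r v) - \<alpha> * r vk"
  proof -
    have "(\<Sum>v\<in>V. r' v) = (\<Sum>v\<in>V. r v) - r vk + c * real (outdeg E vk)"
      using push[of "\<lambda>_. 1"] by (simp add: outdeg_def)
    also have "c * real (outdeg E vk) = (1 - \<alpha>) * r vk"
      using outdeg_pos[OF vk] by (simp add: c_def)
    finally show ?thesis by (simp add: algebra_simps)
  qed
  moreover have "rmax \<le> r vk"
    using big mult_right_mono[of 1 "real (outdeg E vk)" rmax] outdeg_ge_1 vk \<open>0 \<le> rmax\<close> by simp
  ultimately show ?thesis
    using alpha_pos unfolding gfp_inv_def st st' by auto
qed

lemma gfp_terminates: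
  assumes "i \<in> I" "0 < rmax"
  shows "terminates (gfp_step V E I F \<alpha> rmax) (gfp_init E F i)"
proof (rule terminates_by_potential[where Q = "gfp_inv i" and \<Phi> = "\<lambda>st. \<Sum>v\<in>V. snd st v"])
  show "gfp_inv i (gfp_init E F i)" using assms(1) by (rule gfp_inv_init)
  show "gfp_inv i st' \<and> (\<Sum>v\<in>V. snd st' v) \<le> (\<Sum>v\<in>V. snd st v) - \<alpha> * rmax"
    if "gfp_inv i st" "gfp_step V E I F \<alpha> rmax st st'" for st st'
    using gfp_inv_step[OF that] assms(2) by simp
  show "0 \<le> (\<Sum>v\<in>V. snd st v)" if "gfp_inv i st" for st
    using that unfolding gfp_inv_def by (simp add: sum_nonneg)
  show "0 < \<alpha> * rmax" using alpha_pos assms(2) by simp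
qed

lemma gfp_output_error:
  assumes i: "i \<in> I" and j: "j \<in> I" and "0 \<le> rmax" and "gfp_output V E I F \<alpha> rmax i h"
  shows "0 \<le> pprd_super E \<alpha> F i j - h j"
    and "pprd_super E \<alpha> F i j - h j \<le> rmax * (real (card E) * dpr V E \<alpha> F j)"
proof -
  obtain r where reach: "(gfp_step V E I F \<alpha> rmax)\<^sup>*\<^sup>* (gfp_init E F i) (h, r)"
    and final: "\<not> (\<exists>st'. gfp_step V E I F \<alpha> rmax (h, r) st')"
    using assms(4) unfolding gfp_output_def by blast
  have "gfp_inv i (h, r)"
    using reach
  proof (induction rule: rtranclp_induct)
    case base
    then show ?case using i by (rule gfp_inv_init)
  next
    case (step st st')
    then show ?case using gfp_inv_step \<open>0 \<le> rmax\<close> by blast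
  qed
  then have r_nonneg: "\<And>v. 0 \<le> r v"
    and error: "pprd_super E \<alpha> F i j - h j = (\<Sum>v\<in>V. ppr_to_super j v * r v)"
    unfolding gfp_inv_def using j by auto
  show "0 \<le> pprd_super E \<alpha> F i j - h j"
    unfolding error using r_nonneg ppr_to_super_nonneg by (simp add: sum_nonneg)
  have "(\<Sum>v\<in>V. ppr_to_super j v * r v) \<le> (\<Sum>v\<in>V. ppr_to_super j v * (real (outdeg E v) * rmax))"
    using gfp_final_residue_le[OF final] ppr_to_super_nonneg by (intro sum_mono mult_left_mono) auto
  also have "\<dots> = rmax * (real (card E) * dpr V E \<alpha> F j)"
    by (simp add: sum_outdeg_ppr_to_super[OF j, symmetric] sum_distrib_left mult_ac)
  finally show "pprd_super E \<alpha> F i j - h j \<le> rmax * (real (card E) * dpr V E \<alpha> F j)"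
    unfolding error .
qed

definition gbp_inv :: "'i \<Rightarrow> ('i \<Rightarrow> real) \<times> ('v \<Rightarrow> real) \<Rightarrow> bool" where
  "gbp_inv j st \<longleftrightarrow> (\<forall>v. 0 \<le> snd st v) \<and>
     (\<forall>i\<in>I. pprd_super E \<alpha> F i j = fst st i +
        (\<Sum>s\<in>F i. real (outdeg E s) / real (card (F i)) * (\<Sum>v\<in>V. ppr E \<alpha> s v * snd st v)))"

text \<open>Backward push can increase the total residue, so its potential weights each residue by
  the PPR mass that flows into its node.\<close>

definition gbp_potential :: "('v \<Rightarrow> real) \<Rightarrow> real" where
  "gbp_potential r = (\<Sum>s\<in>V. \<Sum>v\<in>V. ppr E \<alpha> s v * r v)"

lemma gbp_inv_init: "j \<in> I \<Longrightarrow> gbp_inv j (gbp_init F j)"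
proof -
  assume j: "j \<in> I"
  have "(\<Sum>v\<in>V. ppr E \<alpha> s v * (if v \<in> F j then 1 / real (card (F j)) else 0))
      = (\<Sum>v\<in>V \<inter> F j. ppr E \<alpha> s v / real (card (F j)))" for s
    using finite_V by (simp add: sum.inter_restrict if_distrib[of "\<lambda>x. _ * x"] cong: if_cong)
  moreover have "V \<inter> F j = F j" using F_subset j by blast
  ultimately show ?thesis
    unfolding gbp_inv_def gbp_init_def
    by (simp add: pprd_super_eq_sum_ppr_to_super ppr_to_super_def sum_divide_distrib)
qed

lemma sum_ppr_backward_push:
  assumes "vk \<in> V"
  shows "(\<Sum>v\<in>V. ppr E \<alpha> s v * (if v = vk then 0 else r v + (if v \<in> inN E vk
                         then (1 - \<alpha>) * r vk / real (outdeg E v) else 0)))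
       = (\<Sum>v\<in>V. ppr E \<alpha> s v * r v) - \<alpha> * (if s = vk then 1 else 0) * r vk"
proof -
  have "ppr E \<alpha> s vk * r vk = \<alpha> * (if s = vk then 1 else 0) * r vk
       + (\<Sum>v\<in>inN E vk. ppr E \<alpha> s v * ((1 - \<alpha>) * r vk / real (outdeg E v)))"
    by (subst ppr_backward) (simp add: algebra_simps sum_distrib_left sum_distrib_right)
  then show ?thesis
    using sum_push_update[OF finite_V assms inN_subset inN_irrefl,
        where g = "ppr E \<alpha> s" and r = r and c = "\<lambda>v. (1 - \<alpha>) * r vk / real (outdeg E v)"]
    by simp
qed

lemma gbp_inv_step:
  assumes inv: "gbp_inv j st" and step: "gbp_step V E I F \<alpha> rb st st'"
  shows "gbp_inv j st' \<and> gbp_potential (snd st') \<le> gbp_potential (snd st) - \<alpha> * rb"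
proof -
  obtain h r h' r' where st: "st = (h, r)" and st': "st' = (h', r')" by fastforce
  from step obtain vk where vk: "vk \<in> V" and big: "rb < r vk"
    and h': "h' = (\<lambda>i. if i \<in> I \<and> vk \<in> F i
                        then h i + \<alpha> * real (outdeg E vk) * r vk / real (card (F i)) else h i)"
    and r': "r' = (\<lambda>v. if v = vk then 0 else r v + (if v \<in> inN E vk
                       then (1 - \<alpha>) * r vk / real (outdeg E v) else 0))"
    unfolding gbp_step_def st st' fst_conv snd_conv by blast
  have push: "(\<Sum>v\<in>V. ppr E \<alpha> s v * r' v) = (\<Sum>v\<in>V. ppr E \<alpha> s v * r v) - \<alpha> * (if s = vk then 1 else 0) * r vk"
    for s unfolding r' by (rule sum_ppr_backward_push[OF vk])
  have r_nonneg: "\<forall>v. 0 \<le> r v" and r_eq: "\<forall>i\<in>I. pprd_super E \<alpha> F i j = h i +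
      (\<Sum>s\<in>F i. real (outdeg E s) / real (card (F i)) * (\<Sum>v\<in>V. ppr E \<alpha> s v * r v))"
    using inv unfolding gbp_inv_def st by auto
  have "\<forall>v. 0 \<le> r' v"
    using r_nonneg alpha_less_1 by (simp add: r')
  moreover have "pprd_super E \<alpha> F i j = h' i +
      (\<Sum>s\<in>F i. real (outdeg E s) / real (card (F i)) * (\<Sum>v\<in>V. ppr E \<alpha> s v * r' v))" if i: "i \<in> I" for i
    using r_eq i finite_F[OF i]
    by (simp add: h' push right_diff_distrib sum_subtractf if_distrib[of "\<lambda>x. _ * (_ * x * _)"] sum.delta
        cong: if_cong)
  moreover have "gbp_potential r' = gbp_potential r - \<alpha> * r vk"
    unfolding gbp_potential_def using finite_V vk
    by (simp add: push sum_subtractf if_distrib[of "\<lambda>x. _ * x * _"] sum.delta cong: if_cong)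
  ultimately show ?thesis
    using big alpha_pos unfolding gbp_inv_def st st' by auto
qed

lemma gbp_terminates:
  assumes "j \<in> I" "0 < rb"
  shows "terminates (gbp_step V E I F \<alpha> rb) (gbp_init F j)"
proof (rule terminates_by_potential[where Q = "gbp_inv j" and \<Phi> = "\<lambda>st. gbp_potential (snd st)"])
  show "gbp_inv j (gbp_init F j)" using assms(1) by (rule gbp_inv_init)
  show "gbp_inv j st' \<and> gbp_potential (snd st') \<le> gbp_potential (snd st) - \<alpha> * rb"
    if "gbp_inv j st" "gbp_step V E I F \<alpha> rb st st'" for st st'
    using that by (rule gbp_inv_step)
  show "0 \<le> gbp_potential (snd st)" if "gbp_inv j st" for st
    using that unfolding gbp_inv_def gbp_potential_def
    by (simp add: sum_nonneg mult_nonneg_nonneg ppr_nonneg)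
  show "0 < \<alpha> * rb" using alpha_pos assms(2) by simp
qed

lemma gbp_output_error:
  assumes i: "i \<in> I" and j: "j \<in> I" and "gbp_output V E I F \<alpha> rb j h"
  shows "0 \<le> pprd_super E \<alpha> F i j - h i"
    and "pprd_super E \<alpha> F i j - h i \<le> rb * avg_outdeg E F i"
proof -
  obtain r where reach: "(gbp_step V E I F \<alpha> rb)\<^sup>*\<^sup>* (gbp_init F j) (h, r)"
    and final: "\<not> (\<exists>st'. gbp_step V E I F \<alpha> rb (h, r) st')"
    using assms(3) unfolding gbp_output_def by blast
  have "gbp_inv j (h, r)"
    using reach
  proof (induction rule: rtranclp_induct)
    case base
    then show ?case using j by (rule gbp_inv_init)
  next
    case (step st st')
    then show ?case using gbp_inv_step by blast
  qed
  then have r_nonneg: "\<And>v. 0 \<le> r v" and error: "pprd_super E \<alpha> F i j - h i =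
      (\<Sum>s\<in>F i. real (outdeg E s) / real (card (F i)) * (\<Sum>v\<in>V. ppr E \<alpha> s v * r v))"
    unfolding gbp_inv_def using i by auto
  show "0 \<le> pprd_super E \<alpha> F i j - h i"
    unfolding error using r_nonneg by (simp add: sum_nonneg mult_nonneg_nonneg ppr_nonneg)
  have "(\<Sum>v\<in>V. ppr E \<alpha> s v * r v) \<le> rb" if "s \<in> F i" for s
  proof -
    have "(\<Sum>v\<in>V. ppr E \<alpha> s v * r v) \<le> (\<Sum>v\<in>V. ppr E \<alpha> s v * rb)"
      using gbp_final_residue_le[OF final] by (intro sum_mono mult_left_mono ppr_nonneg) auto
    also have "\<dots> = rb"
      using that F_subset i by (simp add: sum_distrib_right[symmetric] ppr_sum_eq_1 subset_iff)
    finally show ?thesis .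
  qed
  then have "pprd_super E \<alpha> F i j - h i \<le> (\<Sum>s\<in>F i. real (outdeg E s) / real (card (F i)) * rb)"
    unfolding error by (intro sum_mono mult_left_mono) auto
  also have "\<dots> = rb * avg_outdeg E F i"
    by (simp add: avg_outdeg_def sum_divide_distrib sum_distrib_left mult_ac)
  finally show "pprd_super E \<alpha> F i j - h i \<le> rb * avg_outdeg E F i" .
qed

lemma rbmax_tau_eq: "rbmax_tau E I F \<epsilon> \<delta> j = \<epsilon> * \<delta> / Max (avg_outdeg E F ` (I - {j}))"
  unfolding rbmax_tau_def avg_outdeg_def[abs_def] ..

lemma avg_outdeg_le_Max:
  assumes "i \<in> I" "i \<noteq> j"
  shows "avg_outdeg E F i \<le> Max (avg_outdeg E F ` (I - {j}))"
  using assms finite_I by (intro Max_ge) auto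

lemma rbmax_tau_pos:
  assumes "i \<in> I" "i \<noteq> j" "0 < \<epsilon>" "0 < \<delta>"
  shows "0 < rbmax_tau E I F \<epsilon> \<delta> j"
  using avg_outdeg_le_Max[OF assms(1,2)] avg_outdeg_pos[OF assms(1)] assms(3,4)
  unfolding rbmax_tau_eq by simp

lemma rbmax_tau_mult_avg_outdeg_le:
  assumes "i \<in> I" "i \<noteq> j" "0 < \<epsilon>" "0 < \<delta>"
  shows "rbmax_tau E I F \<epsilon> \<delta> j * avg_outdeg E F i \<le> \<epsilon> * \<delta>"
proof -
  define M where "M = Max (avg_outdeg E F ` (I - {j}))"
  have "avg_outdeg E F i \<le> M" "0 < avg_outdeg E F i"
    using avg_outdeg_le_Max[OF assms(1,2)] avg_outdeg_pos[OF assms(1)] unfolding M_def by auto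
  then have "\<epsilon> * \<delta> * (avg_outdeg E F i / M) \<le> \<epsilon> * \<delta> * 1"
    using assms(3,4) by (intro mult_left_mono) auto
  then show ?thesis unfolding rbmax_tau_eq M_def[symmetric] by simp
qed

lemma rmax_tau_pos:
  assumes "i \<in> I" "0 < \<epsilon>" "0 < \<delta>" "0 < \<tau>"
  shows "0 < rmax_tau E \<epsilon> \<delta> \<tau>"
  using card_E_pos[OF assms(1)] assms(2-4) unfolding rmax_tau_def by simp

lemma gfp_tau_output_approx:
  assumes i: "i \<in> I" and j: "j \<in> I" and pos: "0 < \<epsilon>" "0 < \<delta>" "0 < \<tau>"
    and small: "dpr V E \<alpha> F j \<le> \<tau>" and out: "gfp_output V E I F \<alpha> (rmax_tau E \<epsilon> \<delta> \<tau>) i h"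
  shows "approx \<epsilon> \<delta> (h j) (pprd_super E \<alpha> F i j)"
proof -
  note error = gfp_output_error[OF i j less_imp_le[OF rmax_tau_pos[OF i pos]] out]
  have "rmax_tau E \<epsilon> \<delta> \<tau> * (real (card E) * dpr V E \<alpha> F j) = \<epsilon> * \<delta> * (dpr V E \<alpha> F j / \<tau>)"
    using card_E_pos[OF i] unfolding rmax_tau_def by simp
  also have "\<dots> \<le> \<epsilon> * \<delta> * 1"
    using pos small by (intro mult_left_mono) auto
  finally show ?thesis
    using error pos by (intro approx_of_underestimate) auto
qed

lemma gbp_tau_output_approx:
  assumes i: "i \<in> I" and j: "j \<in> I" and "i \<noteq> j" and pos: "0 < \<epsilon>" "0 < \<delta>"
    and out: "gbp_output V E I F \<alpha> (rbmax_tau E I F \<epsilon> \<delta> j) j h"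
  shows "approx \<epsilon> \<delta> (h i) (pprd_super E \<alpha> F i j)"
  using gbp_output_error[OF i j out] rbmax_tau_mult_avg_outdeg_le[OF i \<open>i \<noteq> j\<close> pos] pos
  by (intro approx_of_underestimate) auto

end

lemma exists_other_elem:
  assumes "finite I" "2 \<le> card I" "j \<in> I"
  obtains i where "i \<in> I" "i \<noteq> j"
proof -
  have "card (I - {j}) \<noteq> 0" using assms by (simp add: card_Diff_singleton)
  then obtain i where "i \<in> I - {j}" by (metis card.empty ex_in_conv)
  then show thesis using that by blast
qed

theorem theorem3:
  fixes V :: "'v set" and E :: "('v \<times> 'v) set" and \<alpha> :: real
    and I :: "'i set" and F :: "'i \<Rightarrow> 'v set"
    and \<epsilon> \<delta> \<tau> :: real
  assumes finV: "finite V"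
    and EV: "E \<subseteq> V \<times> V"
    and noloop: "\<forall>v. (v, v) \<notin> E"
    and outdeg_pos: "\<forall>v\<in>V. outdeg E v \<ge> 1"
    and alpha: "0 < \<alpha>" "\<alpha> < 1"
    and finI: "finite I"
    and cardI: "card I \<ge> 2"
    and F_ne: "\<forall>i\<in>I. F i \<noteq> {}"
    and F_sub: "\<forall>i\<in>I. F i \<subseteq> V"
    and F_disj: "\<forall>i\<in>I. \<forall>j\<in>I. i \<noteq> j \<longrightarrow> F i \<inter> F j = {}"
    and pos: "\<epsilon> > 0" "\<delta> > 0" "\<tau> > 0"
  shows
    "(\<forall>i\<in>I. terminates (gfp_step V E I F \<alpha> (rmax_tau E \<epsilon> \<delta> \<tau>)) (gfp_init E F i))
     \<and> (\<forall>j\<in>I. dpr V E \<alpha> F j > \<tau> \<longrightarrow>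
           terminates (gbp_step V E I F \<alpha> (rbmax_tau E I F \<epsilon> \<delta> j)) (gbp_init F j))
     \<and> (\<forall>hf hb.
          (\<forall>i\<in>I. gfp_output V E I F \<alpha> (rmax_tau E \<epsilon> \<delta> \<tau>) i (hf i)) \<longrightarrow>
          (\<forall>j\<in>I. dpr V E \<alpha> F j > \<tau> \<longrightarrow> gbp_output V E I F \<alpha> (rbmax_tau E I F \<epsilon> \<delta> j) j (hb j)) \<longrightarrow>
          (\<forall>i\<in>I. \<forall>j\<in>I. i \<noteq> j \<longrightarrow>
             approx \<epsilon> \<delta> (if dpr V E \<alpha> F j > \<tau> then hb j i else hf i j) (pprd_super E \<alpha> F i j)))"
proof -
  interpret supernode_graph V E \<alpha> I F
    using finV EV noloop outdeg_pos alpha finI F_ne F_sub by unfold_locales auto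
  show ?thesis
  proof (intro conjI ballI impI allI)
    show "terminates (gfp_step V E I F \<alpha> (rmax_tau E \<epsilon> \<delta> \<tau>)) (gfp_init E F i)" if "i \<in> I" for i
      using that pos by (intro gfp_terminates rmax_tau_pos)
    show "terminates (gbp_step V E I F \<alpha> (rbmax_tau E I F \<epsilon> \<delta> j)) (gbp_init F j)" if "j \<in> I" for j
    proof -
      obtain i where "i \<in> I" "i \<noteq> j" using exists_other_elem[OF finI cardI \<open>j \<in> I\<close>] .
      then show ?thesis using \<open>j \<in> I\<close> pos by (intro gbp_terminates rbmax_tau_pos)
    qed
    show "approx \<epsilon> \<delta> (if dpr V E \<alpha> F j > \<tau> then hb j i else hf i j) (pprd_super E \<alpha> F i j)"
      if "\<forall>i\<in>I. gfp_output V E I F \<alpha> (rmax_tau E \<epsilon> \<delta> \<tau>) i (hf i)"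
        and "\<forall>j\<in>I. dpr V E \<alpha> F j > \<tau> \<longrightarrow> gbp_output V E I F \<alpha> (rbmax_tau E I F \<epsilon> \<delta> j) j (hb j)"
        and "i \<in> I" "j \<in> I" "i \<noteq> j" for hf hb i j
      using that pos by (auto intro: gfp_tau_output_approx gbp_tau_output_approx)
  qed
qed

end
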